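(* For any $A\subset\Omega$, if $\phi\in F_A$ then $\phi_\pi\in F_A$.
   Context: Let $\mathcal H$ be a complex Hilbert space. A projection is a bounded self-adjoint idempotent operator; $\wedge_\alpha p_\alpha$ is the projection onto the intersection of ranges. Let $S$ be a set; for each $t\in S$ let $\Gamma(t)$ be a countable set and for $a\in\Gamma(t)$ let $p^t_a$ be a projection on $\mathcal H$ with $\sum_{a\in\Gamma(t)}p^t_a=I$ (strong convergence). Let $\pi=\{p^t_a\}$ and $p^{t_1,\dots,t_k}_{a_1,\dots,a_k}=\wedge_{i=1}^kp^{t_i}_{a_i}$. $\pi$ commutes on $\phi$ if $W\phi=V\phi$ whenever $W,V$ are finite products of elements of $\pi$ with the same factors (with multiplicity) in possibly different orders; $\mathcal H_\pi$ is the closed subspace of such $\phi$, $p_\pi$ its projection, $\phi_\pi=p_\pi\phi$. Let $\Omega=\prod_{t\in S}\Gamma(t)$. For $A\subset\Omega$, $F_A=\{\phi\in\mathcal H:$ for every $\omega\in A$ there are $t_1,\dots,t_k\in S$ with $p^{t_1,\dots,t_k}_{\omega_{t_1},\dots,\omega_{t_k}}\phi=0\}$. *)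

theory Defs
  imports "HOL-Analysis.Analysis" "HOL-Library.Multiset"
begin

class complex_vector = real_vector +
  fixes scaleC :: "complex \<Rightarrow> 'a \<Rightarrow> 'a" (infixr "*\<^sub>C" 75)
  assumes scaleC_add_right: "a *\<^sub>C (x + y) = a *\<^sub>C x + a *\<^sub>C y"
    and scaleC_add_left: "(a + b) *\<^sub>C x = a *\<^sub>C x + b *\<^sub>C x"
    and scaleC_scaleC: "a *\<^sub>C (b *\<^sub>C x) = (a * b) *\<^sub>C x"
    and scaleC_one: "1 *\<^sub>C x = x"
    and scaleR_scaleC: "scaleR r x = complex_of_real r *\<^sub>C x"

class complex_normed_vector = complex_vector + real_normed_vector +
  assumes norm_scaleC: "norm (a *\<^sub>C x) = cmod a * norm x"

class complex_inner = complex_normed_vector +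
  fixes cinner :: "'a \<Rightarrow> 'a \<Rightarrow> complex"
  assumes cinner_add_left: "cinner (x + y) z = cinner x z + cinner y z"
    and cinner_scaleC_left: "cinner (a *\<^sub>C x) y = cnj a * cinner x y"
    and cinner_commute: "cinner x y = cnj (cinner y x)"
    and cinner_self_norm: "cinner x x = complex_of_real ((norm x)\<^sup>2)"

class chilbert_space = complex_inner + complete_space

definition bounded_clinear :: "('a::complex_normed_vector \<Rightarrow> 'b::complex_normed_vector) \<Rightarrow> bool" where
  "bounded_clinear f \<longleftrightarrow> bounded_linear f \<and> (\<forall>c x. f (c *\<^sub>C x) = c *\<^sub>C f x)"

definition is_projection :: "('h::chilbert_space \<Rightarrow> 'h) \<Rightarrow> bool" where
  "is_projection P \<longleftrightarrow> bounded_clinear P \<and> P \<circ> P = P \<and>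
     (\<forall>x y. cinner (P x) y = cinner x (P y))"

definition proj_onto :: "'h::chilbert_space set \<Rightarrow> ('h \<Rightarrow> 'h)" where
  "proj_onto M = (THE P. is_projection P \<and> range P = M)"

definition proj_meet :: "('h::chilbert_space \<Rightarrow> 'h) set \<Rightarrow> ('h \<Rightarrow> 'h)" where
  "proj_meet Ps = proj_onto (\<Inter>P\<in>Ps. range P)"

definition op_prod :: "('h \<Rightarrow> 'h) list \<Rightarrow> ('h \<Rightarrow> 'h)" where
  "op_prod ws = foldr (\<circ>) ws id"

definition commutes_on :: "('h \<Rightarrow> 'h) set \<Rightarrow> 'h \<Rightarrow> bool" where
  "commutes_on Pis \<phi> \<longleftrightarrow> (\<forall>ws vs. set ws \<subseteq> Pis \<longrightarrow> set vs \<subseteq> Pis \<longrightarrow> mset ws = mset vs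
       \<longrightarrow> op_prod ws \<phi> = op_prod vs \<phi>)"

definition H_pi :: "('h \<Rightarrow> 'h) set \<Rightarrow> 'h set" where
  "H_pi Pis = {\<phi>. commutes_on Pis \<phi>}"

definition p_pi :: "('h::chilbert_space \<Rightarrow> 'h) set \<Rightarrow> ('h \<Rightarrow> 'h)" where
  "p_pi Pis = proj_onto (H_pi Pis)"

definition pi_family :: "'t set \<Rightarrow> ('t \<Rightarrow> 'a set) \<Rightarrow> ('t \<Rightarrow> 'a \<Rightarrow> 'h \<Rightarrow> 'h) \<Rightarrow> ('h \<Rightarrow> 'h) set" where
  "pi_family S \<Gamma> p = {p t a | t a. t \<in> S \<and> a \<in> \<Gamma> t}"

definition Omega :: "'t set \<Rightarrow> ('t \<Rightarrow> 'a set) \<Rightarrow> ('t \<Rightarrow> 'a) set" where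
  "Omega S \<Gamma> = PiE S \<Gamma>"

definition F_set :: "'t set \<Rightarrow> ('t \<Rightarrow> 'a \<Rightarrow> 'h::chilbert_space \<Rightarrow> 'h) \<Rightarrow> ('t \<Rightarrow> 'a) set \<Rightarrow> 'h set" where
  "F_set S p A = {\<phi>. \<forall>\<omega>\<in>A. \<exists>ts. ts \<noteq> [] \<and> set ts \<subseteq> S \<and>
       proj_meet ((\<lambda>t. p t (\<omega> t)) ` set ts) \<phi> = 0}"

end

theory Submission imports Defs begin

(* The commutation subspace H_pi is closed, being an intersection of equalisers of bounded
   operators, and it is invariant under every q in pi: append q to both words.  A closed
   subspace invariant under a self-adjoint operator reduces it, so p_pi commutes with every
   q in pi.  Hence p_pi maps the range of a meet Q of elements of pi into itself, so it
   commutes with Q as well, and Q phi = 0 gives Q (p_pi phi) = p_pi (Q phi) = 0.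
   The orthogonal projections involved exist by the projection theorem: a minimizing
   sequence for the distance to a closed subspace is Cauchy by the parallelogram law. *)

lemma cinner_zero_left [simp]: "cinner 0 (y::'a::complex_inner) = 0"
  using cinner_add_left[of 0 0 y] by simp

lemma cinner_zero_right [simp]: "cinner (y::'a::complex_inner) 0 = 0"
  using cinner_commute[of y 0] by simp

lemma cinner_add_right: "cinner (x::'a::complex_inner) (y + z) = cinner x y + cinner x z"
  using cinner_commute[of x "y + z"] cinner_commute[of x y] cinner_commute[of x z]
  by (simp add: cinner_add_left)

lemma cinner_scaleC_right: "cinner (x::'a::complex_inner) (a *\<^sub>C y) = a * cinner x y"
  using cinner_commute[of x "a *\<^sub>C y"] cinner_commute[of x y]
  by (simp add: cinner_scaleC_left)

lemma cinner_minus_left: "cinner (- x) (y::'a::complex_inner) = - cinner x y"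
  using cinner_add_left[of "-x" x y] by (simp add: eq_neg_iff_add_eq_0)

lemma cinner_diff_left: "cinner (x - y) (z::'a::complex_inner) = cinner x z - cinner y z"
  using cinner_add_left[of x "-y" z] by (simp add: cinner_minus_left)

lemma cinner_diff_right: "cinner (z::'a::complex_inner) (x - y) = cinner z x - cinner z y"
  using cinner_commute[of z "x - y"] cinner_commute[of z x] cinner_commute[of z y]
  by (simp add: cinner_diff_left)

lemma power2_norm_eq_cinner: "(norm (x::'a::complex_inner))\<^sup>2 = Re (cinner x x)"
  by (simp add: cinner_self_norm)

lemma cinner_self_eq_zero: "cinner x x = 0 \<longleftrightarrow> (x::'a::complex_inner) = 0"
  by (simp add: cinner_self_norm)

lemma parallelogram_law:
  fixes x y :: "'a::complex_inner"
  shows "(norm (x + y))\<^sup>2 + (norm (x - y))\<^sup>2 = 2 * (norm x)\<^sup>2 + 2 * (norm y)\<^sup>2"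
  by (simp add: power2_norm_eq_cinner cinner_add_left cinner_add_right
      cinner_diff_left cinner_diff_right)

definition csubspace :: "'a::complex_vector set \<Rightarrow> bool" where
  "csubspace M \<longleftrightarrow> 0 \<in> M \<and> (\<forall>x\<in>M. \<forall>y\<in>M. x + y \<in> M) \<and> (\<forall>c. \<forall>x\<in>M. c *\<^sub>C x \<in> M)"

lemma csubspace_scaleR:
  assumes "csubspace M" "x \<in> M" shows "r *\<^sub>R x \<in> M"
  using assms unfolding csubspace_def by (simp add: scaleR_scaleC)

lemma csubspace_diff:
  assumes "csubspace M" "x \<in> M" "y \<in> M" shows "x - y \<in> M"
  using assms csubspace_scaleR[OF assms(1,3), of "-1"] unfolding csubspace_def
  by (metis diff_conv_add_uminus scaleR_minus1_left)

lemma csubspace_INT: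
  assumes "\<And>i. i \<in> I \<Longrightarrow> csubspace (F i)"
  shows "csubspace (\<Inter>i\<in>I. F i)"
  using assms unfolding csubspace_def by blast

lemma csubspace_Collect_eq:
  assumes "bounded_clinear f" "bounded_clinear g"
  shows "csubspace {x. f x = g x}"
  using assms unfolding csubspace_def bounded_clinear_def
  by (auto simp: linear_0 linear_add bounded_linear.linear)

lemma closed_Collect_eq_bounded_linear:
  assumes "bounded_linear f" "bounded_linear g"
  shows "closed {x. f x = g x}"
  using assms by (intro closed_Collect_eq linear_continuous_on)

section \<open>Orthogonal projection onto a closed subspace\<close>

lemma norm_diff_sq_le_of_dist_bound:
  fixes x m1 m2 :: "'a::complex_inner"
  assumes M: "csubspace M" "m1 \<in> M" "m2 \<in> M"
    and d: "0 \<le> d" "\<And>w. w \<in> M \<Longrightarrow> d \<le> norm (x - w)"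
  shows "(norm (m1 - m2))\<^sup>2 \<le> 2 * (norm (x - m1))\<^sup>2 + 2 * (norm (x - m2))\<^sup>2 - 4 * d\<^sup>2"
proof -
  have "(1/2) *\<^sub>R (m1 + m2) \<in> M"
    using M by (intro csubspace_scaleR) (auto simp: csubspace_def)
  hence "2 * d \<le> 2 * norm (x - (1/2) *\<^sub>R (m1 + m2))" using d(2) by simp
  also have "\<dots> = norm ((x - m1) + (x - m2))"
    using norm_scaleR[of 2 "x - (1/2) *\<^sub>R (m1 + m2)"] by (simp add: algebra_simps scaleR_2)
  finally have "(2 * d)\<^sup>2 \<le> (norm ((x - m1) + (x - m2)))\<^sup>2"
    using d(1) by (intro power_mono) auto
  moreover have "norm ((x - m1) - (x - m2)) = norm (m1 - m2)"
    by (simp add: norm_minus_commute)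
  ultimately show ?thesis
    using parallelogram_law[of "x - m1" "x - m2"] by (simp add: power_mult_distrib)
qed

lemma minimizing_sequence_Cauchy:
  fixes x :: "'a::complex_inner"
  assumes M: "csubspace M" "\<And>n. f n \<in> M"
    and d: "0 \<le> d" "\<And>w. w \<in> M \<Longrightarrow> d \<le> norm (x - w)"
    and lim: "(\<lambda>n. norm (x - f n)) \<longlonglongrightarrow> d"
  shows "Cauchy f"
proof (rule metric_CauchyI)
  fix e :: real assume "0 < e"
  have "(\<lambda>n. (norm (x - f n))\<^sup>2) \<longlonglongrightarrow> d\<^sup>2"
    by (intro tendsto_intros lim)
  moreover have "d\<^sup>2 < d\<^sup>2 + e\<^sup>2 / 4" using \<open>0 < e\<close> by simp
  ultimately have "eventually (\<lambda>n. (norm (x - f n))\<^sup>2 < d\<^sup>2 + e\<^sup>2 / 4) sequentially"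
    by (rule order_tendstoD(2))
  then obtain N where N: "\<And>n. n \<ge> N \<Longrightarrow> (norm (x - f n))\<^sup>2 < d\<^sup>2 + e\<^sup>2 / 4"
    unfolding eventually_sequentially by blast
  have "dist (f m) (f n) < e" if "m \<ge> N" "n \<ge> N" for m n
  proof -
    have "(norm (f m - f n))\<^sup>2 \<le> 2 * (norm (x - f m))\<^sup>2 + 2 * (norm (x - f n))\<^sup>2 - 4 * d\<^sup>2"
      by (rule norm_diff_sq_le_of_dist_bound[OF M(1) M(2) M(2) d])
    also have "\<dots> < e\<^sup>2"
      using N[OF that(1)] N[OF that(2)] by linarith
    finally have "(norm (f m - f n))\<^sup>2 < e\<^sup>2" .
    hence "norm (f m - f n) < e"
      by (rule power_less_imp_less_base) (use \<open>0 < e\<close> in simp)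
    thus ?thesis by (simp add: dist_norm)
  qed
  thus "\<exists>N. \<forall>m\<ge>N. \<forall>n\<ge>N. dist (f m) (f n) < e" by blast
qed

lemma closed_csubspace_nearest_point:
  fixes x :: "'a::chilbert_space"
  assumes M: "csubspace M" "closed M"
  obtains m where "m \<in> M" "\<And>w. w \<in> M \<Longrightarrow> norm (x - m) \<le> norm (x - w)"
proof -
  define D where "D = (\<lambda>w. norm (x - w)) ` M"
  define d where "d = Inf D"
  have "D \<noteq> {}" using M(1) unfolding D_def csubspace_def by blast
  have "bdd_below D" unfolding D_def by (rule bdd_belowI[of _ 0]) auto
  have d: "0 \<le> d" "\<And>w. w \<in> M \<Longrightarrow> d \<le> norm (x - w)"
    unfolding d_def using \<open>D \<noteq> {}\<close> \<open>bdd_below D\<close>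
    by (auto intro: cInf_greatest cInf_lower simp: D_def)
  have "d \<in> closure D"
    unfolding d_def using \<open>D \<noteq> {}\<close> \<open>bdd_below D\<close> by (rule closure_contains_Inf)
  then obtain s where s: "\<And>n. s n \<in> D" "s \<longlonglongrightarrow> d"
    unfolding closure_sequential by blast
  have "\<forall>n. \<exists>w\<in>M. s n = norm (x - w)" using s(1) unfolding D_def by blast
  then obtain f where f: "\<And>n. f n \<in> M" "\<And>n. s n = norm (x - f n)" by metis
  have lim: "(\<lambda>n. norm (x - f n)) \<longlonglongrightarrow> d" using s(2) by (simp flip: f(2))
  have "Cauchy f" by (rule minimizing_sequence_Cauchy[OF M(1) f(1) d lim])
  then obtain m where m: "f \<longlonglongrightarrow> m"
    using Cauchy_convergent convergent_def by blast
  have "(\<lambda>n. norm (x - f n)) \<longlonglongrightarrow> norm (x - m)"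
    by (intro tendsto_intros m)
  hence "norm (x - m) = d" using lim by (rule LIMSEQ_unique)
  thus ?thesis using that closed_sequentially[OF M(2) f(1) m] d(2) by simp
qed

lemma nearest_point_orthogonal:
  fixes x m :: "'a::complex_inner"
  assumes M: "csubspace M" "m \<in> M" and min: "\<And>w. w \<in> M \<Longrightarrow> norm (x - m) \<le> norm (x - w)"
    and y: "y \<in> M"
  shows "cinner (x - m) y = 0"
proof (cases "y = 0")
  case False
  define z where "z = x - m"
  define c where "c = cinner z y"
  define N where "N = (norm y)\<^sup>2"
  have N: "N > 0" using False by (simp add: N_def)
  \<comment> \<open>Unless c = 0, the squared distance from x to m + t y is smaller by |c|^2 / N.\<close>
  define t where "t = cnj c / complex_of_real N"
  have "m + t *\<^sub>C y \<in> M" using M y unfolding csubspace_def by blast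
  hence "norm z \<le> norm (z - t *\<^sub>C y)"
    using min[of "m + t *\<^sub>C y"] by (simp add: z_def algebra_simps)
  hence le: "(norm z)\<^sup>2 \<le> (norm (z - t *\<^sub>C y))\<^sup>2" by (simp add: power_mono)
  have yz: "cinner y z = cnj c" unfolding c_def by (metis cinner_commute)
  have "cinner (z - t *\<^sub>C y) (z - t *\<^sub>C y)
      = cinner z z - t * cinner z y - cnj t * cinner y z + cnj t * t * cinner y y"
    by (simp add: cinner_diff_left cinner_diff_right cinner_scaleC_left cinner_scaleC_right
        algebra_simps)
  also have "\<dots> = cinner z z - t * c - cnj t * cnj c + cnj t * t * complex_of_real N"
    unfolding N_def cinner_self_norm yz c_def ..
  also have "\<dots> = cinner z z - c * cnj c / complex_of_real N"
    using N unfolding t_def by (simp add: field_simps)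
  also have "c * cnj c / complex_of_real N = complex_of_real ((cmod c)\<^sup>2 / N)"
    by (simp add: complex_norm_square[symmetric])
  finally have "(norm (z - t *\<^sub>C y))\<^sup>2 = (norm z)\<^sup>2 - (cmod c)\<^sup>2 / N"
    by (simp add: power2_norm_eq_cinner)
  with le N have "(cmod c)\<^sup>2 / N \<le> 0" by linarith
  with N have "cmod c = 0" by (simp add: divide_le_0_iff)
  thus ?thesis by (simp add: c_def z_def)
qed simp

definition perp_foot :: "'a::complex_inner set \<Rightarrow> 'a \<Rightarrow> 'a \<Rightarrow> bool" where
  "perp_foot M x m \<longleftrightarrow> m \<in> M \<and> (\<forall>y\<in>M. cinner (x - m) y = 0)"

lemma perp_foot_unique:
  assumes M: "csubspace M" and "perp_foot M x m1" "perp_foot M x m2"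
  shows "m1 = m2"
proof -
  have "m2 - m1 \<in> M" using assms by (auto simp: perp_foot_def intro: csubspace_diff)
  hence "cinner (m2 - m1) (m2 - m1) = cinner (x - m1) (m2 - m1) - cinner (x - m2) (m2 - m1)"
    by (metis cinner_diff_left diff_diff_eq2 diff_add_cancel add_diff_cancel_left')
  also have "\<dots> = 0" using assms \<open>m2 - m1 \<in> M\<close> by (simp add: perp_foot_def)
  finally show ?thesis by (simp add: cinner_self_eq_zero)
qed

lemma perp_foot_exists:
  fixes x :: "'a::chilbert_space"
  assumes "csubspace M" "closed M"
  shows "\<exists>m. perp_foot M x m"
proof -
  obtain m where "m \<in> M" "\<And>w. w \<in> M \<Longrightarrow> norm (x - m) \<le> norm (x - w)"
    using closed_csubspace_nearest_point[OF assms] by blast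
  thus ?thesis using nearest_point_orthogonal[OF assms(1)] unfolding perp_foot_def by blast
qed

lemma projection_bounded_linear: "is_projection P \<Longrightarrow> bounded_linear P"
  by (simp add: is_projection_def bounded_clinear_def)

lemma projection_idem: "is_projection P \<Longrightarrow> P (P x) = P x"
  by (simp add: is_projection_def fun_eq_iff)

lemma projection_self_adjoint: "is_projection P \<Longrightarrow> cinner (P x) y = cinner x (P y)"
  by (simp add: is_projection_def)

lemma range_projection_eq: "is_projection P \<Longrightarrow> range P = {x. P x = id x}"
  by (auto simp: projection_idem) (metis rangeI)

lemma projection_diff_self: "is_projection P \<Longrightarrow> P (x - P x) = 0"
  by (simp add: projection_idem projection_bounded_linear linear_diff bounded_linear.linear)

lemma perp_foot_projection:
  assumes P: "is_projection P"
  shows "perp_foot (range P) x (P x)"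
proof -
  have "P (x - P x) = 0" by (rule projection_diff_self[OF P])
  hence "cinner (x - P x) (P v) = 0" for v
    by (metis P projection_self_adjoint cinner_zero_left)
  thus ?thesis unfolding perp_foot_def by auto
qed

lemma pythagoras:
  fixes x y :: "'a::complex_inner"
  assumes "cinner x y = 0"
  shows "(norm (x + y))\<^sup>2 = (norm x)\<^sup>2 + (norm y)\<^sup>2"
proof -
  have "cinner y x = 0" using assms cinner_commute[of y x] by simp
  thus ?thesis using assms by (simp add: power2_norm_eq_cinner cinner_add_left cinner_add_right)
qed

definition orth_proj :: "'a::complex_inner set \<Rightarrow> 'a \<Rightarrow> 'a" where
  "orth_proj M x = (SOME m. perp_foot M x m)"

context
  fixes M :: "'a::chilbert_space set"
  assumes M: "csubspace M" "closed M"
begin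

lemma orth_proj_perp_foot: "perp_foot M x (orth_proj M x)"
  unfolding orth_proj_def using perp_foot_exists[OF M] by (rule someI_ex)

lemma orth_proj_eqI: "perp_foot M x m \<Longrightarrow> orth_proj M x = m"
  using perp_foot_unique[OF M(1) orth_proj_perp_foot] .

lemma orth_proj_in: "orth_proj M x \<in> M"
  using orth_proj_perp_foot by (simp add: perp_foot_def)

lemma orth_proj_orthogonal: "y \<in> M \<Longrightarrow> cinner (x - orth_proj M x) y = 0"
  using orth_proj_perp_foot by (simp add: perp_foot_def)

lemma orth_proj_orthogonal': "y \<in> M \<Longrightarrow> cinner y (x - orth_proj M x) = 0"
  by (metis cinner_commute complex_cnj_zero orth_proj_orthogonal)

lemma orth_proj_fixes: "m \<in> M \<Longrightarrow> orth_proj M m = m"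
  by (rule orth_proj_eqI) (simp add: perp_foot_def)

lemma range_orth_proj: "range (orth_proj M) = M"
  using orth_proj_in orth_proj_fixes by (metis image_subsetI rangeI subsetI subset_antisym)

lemma orth_proj_add: "orth_proj M (x + y) = orth_proj M x + orth_proj M y"
proof (rule orth_proj_eqI)
  have split: "(x + y) - (orth_proj M x + orth_proj M y) = (x - orth_proj M x) + (y - orth_proj M y)"
    by simp
  have "cinner ((x + y) - (orth_proj M x + orth_proj M y)) w = 0" if "w \<in> M" for w
    by (simp only: split cinner_add_left orth_proj_orthogonal[OF that] add_0_left)
  moreover have "orth_proj M x + orth_proj M y \<in> M"
    using M(1) orth_proj_in by (simp add: csubspace_def)
  ultimately show "perp_foot M (x + y) (orth_proj M x + orth_proj M y)"
    unfolding perp_foot_def by blast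
qed

lemma orth_proj_scaleC: "orth_proj M (c *\<^sub>C x) = c *\<^sub>C orth_proj M x"
proof (rule orth_proj_eqI)
  have "cinner (c *\<^sub>C x - c *\<^sub>C orth_proj M x) y = cnj c * cinner (x - orth_proj M x) y" for y
    by (simp add: cinner_diff_left cinner_scaleC_left right_diff_distrib)
  thus "perp_foot M (c *\<^sub>C x) (c *\<^sub>C orth_proj M x)"
    using M(1) orth_proj_in orth_proj_orthogonal by (simp add: perp_foot_def csubspace_def)
qed

lemma norm_orth_proj_le: "norm (orth_proj M x) \<le> norm x"
proof -
  have "(norm x)\<^sup>2 = (norm (orth_proj M x))\<^sup>2 + (norm (x - orth_proj M x))\<^sup>2"
    using pythagoras[OF orth_proj_orthogonal'[OF orth_proj_in, of x x]] by simp
  hence "(norm (orth_proj M x))\<^sup>2 \<le> (norm x)\<^sup>2" by simp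
  thus ?thesis by (rule power2_le_imp_le) simp
qed

lemma orth_proj_self_adjoint: "cinner (orth_proj M x) y = cinner x (orth_proj M y)"
proof -
  have "cinner (orth_proj M x) y = cinner (orth_proj M x) (orth_proj M y)"
    using cinner_add_right[of "orth_proj M x" "orth_proj M y" "y - orth_proj M y"]
      orth_proj_orthogonal'[OF orth_proj_in] by simp
  also have "\<dots> = cinner x (orth_proj M y)"
    using cinner_add_left[of "orth_proj M x" "x - orth_proj M x" "orth_proj M y"]
      orth_proj_orthogonal[OF orth_proj_in] by simp
  finally show ?thesis .
qed

lemma is_projection_orth_proj: "is_projection (orth_proj M)"
proof -
  have "bounded_linear (orth_proj M)"
    using norm_orth_proj_le
    by (intro bounded_linear_intro[where K=1]) (simp_all add: orth_proj_add scaleR_scaleC orth_proj_scaleC)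
  thus ?thesis
    using orth_proj_in orth_proj_fixes orth_proj_scaleC orth_proj_self_adjoint
    by (simp add: is_projection_def bounded_clinear_def fun_eq_iff)
qed

lemma proj_onto_eq_orth_proj: "proj_onto M = orth_proj M"
  unfolding proj_onto_def
proof (rule the_equality)
  show "is_projection (orth_proj M) \<and> range (orth_proj M) = M"
    using is_projection_orth_proj range_orth_proj by blast
  fix P assume P: "is_projection P \<and> range P = M"
  show "P = orth_proj M"
  proof
    fix x
    have "perp_foot M x (P x)" using perp_foot_projection[of P x] P by simp
    thus "P x = orth_proj M x" by (rule orth_proj_eqI[symmetric])
  qed
qed

lemma is_projection_proj_onto: "is_projection (proj_onto M)" "range (proj_onto M) = M"
  using is_projection_orth_proj range_orth_proj by (simp_all add: proj_onto_eq_orth_proj)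

end

lemma is_projection_proj_meet:
  fixes Qs :: "('a::chilbert_space \<Rightarrow> 'a) set"
  assumes "\<And>q. q \<in> Qs \<Longrightarrow> is_projection q"
  shows "is_projection (proj_meet Qs)" "range (proj_meet Qs) = (\<Inter>q\<in>Qs. range q)"
proof -
  have id: "bounded_clinear (id :: 'a \<Rightarrow> 'a)"
    by (simp add: bounded_clinear_def id_def)
  have "csubspace (range q) \<and> closed (range q)" if "q \<in> Qs" for q
  proof -
    have "bounded_clinear q" using assms[OF that] by (simp add: is_projection_def)
    thus ?thesis
      unfolding range_projection_eq[OF assms[OF that]] using id
      by (auto intro: csubspace_Collect_eq closed_Collect_eq_bounded_linear simp: bounded_clinear_def)
  qed
  hence "csubspace (\<Inter>q\<in>Qs. range q)" "closed (\<Inter>q\<in>Qs. range q)"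
    by (auto intro: csubspace_INT)
  thus "is_projection (proj_meet Qs)" "range (proj_meet Qs) = (\<Inter>q\<in>Qs. range q)"
    unfolding proj_meet_def by (rule is_projection_proj_onto)+
qed

lemma projection_commute_if_invariant:
  assumes P: "is_projection P" and q: "bounded_linear q" "\<And>x y. cinner (q x) y = cinner x (q y)"
    and inv: "\<And>h. h \<in> range P \<Longrightarrow> q h \<in> range P"
  shows "P (q x) = q (P x)"
proof -
  have fixed: "P (q (P v)) = q (P v)" for v
    using inv[of "P v"] by (metis P projection_idem rangeE rangeI)
  have "P (x - P x) = 0" by (rule projection_diff_self[OF P])
  have "cinner (P (q (x - P x))) v = 0" for v
  proof -
    have "cinner (P (q (x - P x))) v = cinner (x - P x) (P (q (P v)))"
      by (simp add: P projection_self_adjoint q(2) fixed)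
    also have "\<dots> = 0"
      by (simp add: P projection_self_adjoint[symmetric] \<open>P (x - P x) = 0\<close>)
    finally show ?thesis .
  qed
  hence "P (q (x - P x)) = 0" using cinner_self_eq_zero by blast
  moreover have "P (q x) = P (q (P x)) + P (q (x - P x))"
    using linear_add[OF bounded_linear.linear[OF q(1)], of "P x" "x - P x"]
      linear_add[OF bounded_linear.linear[OF projection_bounded_linear[OF P]]] by simp
  ultimately show ?thesis using fixed by simp
qed

section \<open>The commutation subspace\<close>

lemma op_prod_snoc: "op_prod (ws @ [q]) = op_prod ws \<circ> q"
proof -
  have "foldr (\<circ>) ws g = foldr (\<circ>) ws id \<circ> g" for g :: "'a \<Rightarrow> 'a"
    by (induction ws) auto
  from this[of q] show ?thesis unfolding op_prod_def by simp
qed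

lemma bounded_clinear_op_prod:
  assumes "\<And>q. q \<in> set ws \<Longrightarrow> bounded_clinear q"
  shows "bounded_clinear (op_prod ws)"
  using assms
proof (induction ws)
  case Nil
  show ?case by (simp add: op_prod_def bounded_clinear_def)
next
  case (Cons q ws)
  thus ?case unfolding op_prod_def bounded_clinear_def
    by (auto simp: comp_def intro: bounded_linear_compose)
qed

lemma H_pi_eq_INT:
  "H_pi Pis = (\<Inter>(ws, vs)\<in>{(ws, vs). set ws \<subseteq> Pis \<and> set vs \<subseteq> Pis \<and> mset ws = mset vs}.
     {x. op_prod ws x = op_prod vs x})"
  by (auto simp: H_pi_def commutes_on_def)

lemma H_pi_closed_csubspace:
  assumes "\<And>q. q \<in> Pis \<Longrightarrow> bounded_clinear q"
  shows "csubspace (H_pi Pis)" "closed (H_pi Pis)"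
proof -
  have "bounded_clinear (op_prod ws)" if "set ws \<subseteq> Pis" for ws
    using that assms by (intro bounded_clinear_op_prod) auto
  thus "csubspace (H_pi Pis)" "closed (H_pi Pis)"
    unfolding H_pi_eq_INT
    by (auto intro!: csubspace_INT csubspace_Collect_eq closed_Collect_eq_bounded_linear
        simp: bounded_clinear_def)
qed

lemma H_pi_invariant:
  assumes "q \<in> Pis" "h \<in> H_pi Pis"
  shows "q h \<in> H_pi Pis"
proof -
  have h: "commutes_on Pis h" using assms(2) by (simp add: H_pi_def)
  have "op_prod ws (q h) = op_prod vs (q h)"
    if "set ws \<subseteq> Pis" "set vs \<subseteq> Pis" "mset ws = mset vs" for ws vs
  proof -
    have "op_prod (ws @ [q]) h = op_prod (vs @ [q]) h"
      using that assms(1) by (intro h[unfolded commutes_on_def, rule_format]) auto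
    thus ?thesis by (simp add: op_prod_snoc)
  qed
  thus ?thesis unfolding H_pi_def commutes_on_def by blast
qed

lemma is_projection_p_pi:
  fixes Pis :: "('h::chilbert_space \<Rightarrow> 'h) set"
  assumes "\<And>q. q \<in> Pis \<Longrightarrow> is_projection q"
  shows "is_projection (p_pi Pis)" "range (p_pi Pis) = H_pi Pis"
proof -
  have "\<And>q. q \<in> Pis \<Longrightarrow> bounded_clinear q" using assms by (simp add: is_projection_def)
  note H_pi = H_pi_closed_csubspace[OF this]
  show "is_projection (p_pi Pis)"
    unfolding p_pi_def by (rule is_projection_proj_onto(1)[OF H_pi])
  show "range (p_pi Pis) = H_pi Pis"
    unfolding p_pi_def by (rule is_projection_proj_onto(2)[OF H_pi])
qed

lemma p_pi_commute:
  fixes Pis :: "('h::chilbert_space \<Rightarrow> 'h) set"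
  assumes Pis: "\<And>q. q \<in> Pis \<Longrightarrow> is_projection q" and q: "q \<in> Pis"
  shows "p_pi Pis (q x) = q (p_pi Pis x)"
proof (rule projection_commute_if_invariant)
  show "is_projection (p_pi Pis)" by (rule is_projection_p_pi(1)[OF Pis])
  show "bounded_linear q" "cinner (q x) y = cinner x (q y)" for x y
    using Pis[OF q] by (simp_all add: projection_bounded_linear projection_self_adjoint)
  show "q h \<in> range (p_pi Pis)" if "h \<in> range (p_pi Pis)" for h
  proof -
    have "h \<in> H_pi Pis" using that is_projection_p_pi(2)[OF Pis] by simp
    hence "q h \<in> H_pi Pis" by (rule H_pi_invariant[OF q])
    thus ?thesis using is_projection_p_pi(2)[OF Pis] by simp
  qed
qed

lemma proj_meet_p_pi_commute:
  fixes Pis :: "('h::chilbert_space \<Rightarrow> 'h) set"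
  assumes Pis: "\<And>q. q \<in> Pis \<Longrightarrow> is_projection q" and Qs: "Qs \<subseteq> Pis"
  shows "proj_meet Qs (p_pi Pis x) = p_pi Pis (proj_meet Qs x)"
proof (rule projection_commute_if_invariant)
  have Qs_proj: "\<And>q. q \<in> Qs \<Longrightarrow> is_projection q" using Pis Qs by blast
  show "is_projection (proj_meet Qs)" by (rule is_projection_proj_meet[OF Qs_proj])
  show "bounded_linear (p_pi Pis)" "cinner (p_pi Pis x) y = cinner x (p_pi Pis y)" for x y
    using is_projection_p_pi[OF Pis] by (simp_all add: projection_bounded_linear projection_self_adjoint)
  fix h assume "h \<in> range (proj_meet Qs)"
  hence h: "h \<in> (\<Inter>q\<in>Qs. range q)" using is_projection_proj_meet(2)[OF Qs_proj] by simp
  have "p_pi Pis h \<in> range q" if q: "q \<in> Qs" for q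
  proof -
    have "q h = h" using h q range_projection_eq[OF Qs_proj[OF q]] by auto
    hence "q (p_pi Pis h) = p_pi Pis h"
      using p_pi_commute[OF Pis subsetD[OF Qs q], of h] by metis
    thus ?thesis using range_projection_eq[OF Qs_proj[OF q]] by simp
  qed
  thus "p_pi Pis h \<in> range (proj_meet Qs)"
    using is_projection_proj_meet(2)[OF Qs_proj] by simp
qed

lemma proj_meet_p_pi_eq_0:
  fixes Pis :: "('h::chilbert_space \<Rightarrow> 'h) set"
  assumes "\<And>q. q \<in> Pis \<Longrightarrow> is_projection q" "Qs \<subseteq> Pis" "proj_meet Qs x = 0"
  shows "proj_meet Qs (p_pi Pis x) = 0"
  using assms is_projection_p_pi(1)[OF assms(1)]
  by (simp add: proj_meet_p_pi_commute projection_bounded_linear linear_0 bounded_linear.linear)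

theorem lemma1:
  fixes S :: "'t set" and \<Gamma> :: "'t \<Rightarrow> 'a set"
    and p :: "'t \<Rightarrow> 'a \<Rightarrow> 'h::chilbert_space \<Rightarrow> 'h"
    and A :: "('t \<Rightarrow> 'a) set" and \<phi> :: 'h
  assumes countable: "\<And>t. t \<in> S \<Longrightarrow> countable (\<Gamma> t)"
    and proj: "\<And>t a. t \<in> S \<Longrightarrow> a \<in> \<Gamma> t \<Longrightarrow> is_projection (p t a)"
    and sum_id: "\<And>t x. t \<in> S \<Longrightarrow> ((\<lambda>a. p t a x) has_sum x) (\<Gamma> t)"
    and A_sub: "A \<subseteq> Omega S \<Gamma>"
    and phi: "\<phi> \<in> F_set S p A"
  shows "p_pi (pi_family S \<Gamma> p) \<phi> \<in> F_set S p A"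
proof -
  have pi_proj: "\<And>q. q \<in> pi_family S \<Gamma> p \<Longrightarrow> is_projection q"
    unfolding pi_family_def using proj by blast
  show ?thesis unfolding F_set_def
  proof (intro CollectI ballI)
    fix \<omega> assume "\<omega> \<in> A"
    then obtain ts where ts: "ts \<noteq> []" "set ts \<subseteq> S" "proj_meet ((\<lambda>t. p t (\<omega> t)) ` set ts) \<phi> = 0"
      using phi unfolding F_set_def by blast
    have "\<omega> \<in> PiE S \<Gamma>" using \<open>\<omega> \<in> A\<close> A_sub unfolding Omega_def by blast
    hence "(\<lambda>t. p t (\<omega> t)) ` set ts \<subseteq> pi_family S \<Gamma> p"
      using ts(2) unfolding pi_family_def by (force simp: PiE_iff)
    with ts show "\<exists>ts. ts \<noteq> [] \<and> set ts \<subseteq> S \<and>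
        proj_meet ((\<lambda>t. p t (\<omega> t)) ` set ts) (p_pi (pi_family S \<Gamma> p) \<phi>) = 0"
      using proj_meet_p_pi_eq_0[OF pi_proj] by blast
  qed
qed

end
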